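(* For every convex body $K\subset\mathbb{R}^{n+m}$ and every $u\in W$, $$h_{\Sigma_\pi K}(u)=V_+\big(T_u(K)\big).$$ In particular, if $(-1)K=K$, then $h_{\Sigma_\pi K}(u)=\tfrac12\mathrm{Vol}_{n+1}\big(T_u(K)\big)$.
   Context: A convex body is a non-empty compact convex subset of a real vector space; its support function is $h_L(u)=\max\{\langle u,x\rangle:x\in L\}$. Let $V\subset\mathbb{R}^{n+m}$ be a linear subspace of dimension $n$, $W=V^\perp$, $\pi$ the orthogonal projection onto $V$ (also used for the projection $V\oplus\mathbb{R}\to V$). For $u\in W$, $T_u:=\mathrm{Id}_V\oplus\langle u,\cdot\rangle: V\oplus W\to V\oplus\mathbb{R}$, i.e. $T_u(x+y)=(x,\langle u,y\rangle)$. For a convex body $C\subset V\oplus\mathbb{R}$ its shadow volume is $V_+(C):=\int_{\pi(C)}\varphi(x)\,\mathrm{d}x$ with $\varphi(x)=\sup\{t:(x,t)\in C\}$. For $x\in\pi(K)$ let $K_x:=\{y\in W:x+y\in K\}$; a section is $\gamma:\pi(K)\to W$ with $\gamma(x)\in K_x$; the fiber body is $\Sigma_\pi K:=\{\int_{\pi(K)}\gamma(x)\,\mathrm{d}x:\gamma\text{ Borel measurable section}\}\subset W$, $\mathrm{d}x$ Lebesgue measure on $V$. *)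

theory Defs
  imports "HOL-Analysis.Analysis"
begin

definition convex_body :: "'a::euclidean_space set \<Rightarrow> bool" where
  "convex_body K \<longleftrightarrow> K \<noteq> {} \<and> compact K \<and> convex K"

definition supp_fun :: "'a::real_inner set \<Rightarrow> 'a \<Rightarrow> real" where
  "supp_fun L u = Sup ((\<lambda>x. inner u x) ` L)"

definition orth :: "'a::real_inner set \<Rightarrow> 'a set" where
  "orth V = {y. \<forall>v\<in>V. inner y v = 0}"

definition projV :: "'a::real_inner set \<Rightarrow> 'a \<Rightarrow> 'a" where
  "projV V x = (THE p. p \<in> V \<and> (\<forall>v\<in>V. inner (x - p) v = 0))"

definition Tmap :: "'a::real_inner set \<Rightarrow> 'a \<Rightarrow> 'a \<Rightarrow> 'a \<times> real" where
  "Tmap V u z = (projV V z, inner u (z - projV V z))"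

text \<open>Integral over A (a subset of V = range f) w.r.t. Lebesgue measure on V, where f is a
  linear isometry from R^n onto V (the Lebesgue measure on V is the pushforward of lborel).\<close>
definition int_V :: "(real^'n \<Rightarrow> 'a::euclidean_space) \<Rightarrow> 'a set \<Rightarrow> ('a \<Rightarrow> 'b::{banach,second_countable_topology}) \<Rightarrow> 'b" where
  "int_V f A g = (LINT s:{s. f s \<in> A}|lborel. g (f s))"

definition shadow_volume :: "(real^'n \<Rightarrow> 'a::euclidean_space) \<Rightarrow> ('a \<times> real) set \<Rightarrow> real" where
  "shadow_volume f C = int_V f (fst ` C) (\<lambda>x. Sup {t. (x, t) \<in> C})"

definition fiber :: "'a::real_inner set \<Rightarrow> 'a set \<Rightarrow> 'a \<Rightarrow> 'a set" where
  "fiber V K x = {y \<in> orth V. x + y \<in> K}"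

definition fiber_body :: "'a::euclidean_space set \<Rightarrow> (real^'n \<Rightarrow> 'a) \<Rightarrow> 'a set \<Rightarrow> 'a set" where
  "fiber_body V f K =
     {int_V f (projV V ` K) \<gamma> | \<gamma>.
        \<gamma> \<in> borel_measurable (restrict_space borel (projV V ` K)) \<and>
        (\<forall>x\<in>projV V ` K. \<gamma> x \<in> fiber V K x)}"

definition vol_V1 :: "(real^'n \<Rightarrow> 'a::euclidean_space) \<Rightarrow> ('a \<times> real) set \<Rightarrow> real" where
  "vol_V1 f C = measure lborel {(s, t). (f s, t) \<in> C}"

end

theory Submission
  imports Defs
begin

text \<open>For a Borel section \<gamma> of K, \<langle>u, \<integral>\<gamma>\<rangle> = \<integral>\<langle>u, \<gamma>(x)\<rangle> dx, and \<langle>u, \<gamma>(x)\<rangle> is at most the height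
  \<phi>(x) of T_u(K) above x; hence h(u) \<le> V_+(T_u K). The fiberwise maximisers of \<langle>u, \<cdot>\<rangle> need
  not depend measurably on x, but the unique maximisers of the strictly concave function
  \<langle>u, z\<rangle> - d |z|^2 do, and they lose at most d R^2 against \<phi>; letting d \<rightarrow> 0 gives equality.
  For symmetric K the fiber of T_u(K) above x is the interval [-\<phi>(-x), \<phi>(x)], so by Cavalieri's
  principle and the reflection invariance of Lebesgue measure its volume is 2 \<integral>\<phi>.\<close>

definition fiber_max :: "('a \<Rightarrow> 'b) \<Rightarrow> 'a set \<Rightarrow> ('a \<Rightarrow> real) \<Rightarrow> 'b \<Rightarrow> real" where
  "fiber_max P K l x = Sup (l ` {z \<in> K. P z = x})"

lemma compact_continuous_preimage_closed:
  fixes g :: "'a::t2_space \<Rightarrow> 'b::t2_space"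
  assumes "compact K" and "continuous_on K g" and "closed T"
  shows "compact {z \<in> K. g z \<in> T}"
proof -
  have "closed (K \<inter> g -` T)"
    using continuous_closed_preimage[OF assms(2) compact_imp_closed[OF assms(1)] assms(3)] .
  moreover have "{z \<in> K. g z \<in> T} = (K \<inter> g -` T) \<inter> K" by auto
  ultimately show ?thesis
    using closed_Int_compact assms(1) by metis
qed

lemma compact_fiber:
  fixes P :: "'a::t2_space \<Rightarrow> 'b::t2_space"
  assumes "compact K" and "continuous_on K P"
  shows "compact {z \<in> K. P z = x}"
  using compact_continuous_preimage_closed[OF assms, of "{x}"] by simp

lemma fiber_max_attained:
  fixes P :: "'a::t2_space \<Rightarrow> 'b::t2_space"
  assumes K: "compact K" and P: "continuous_on K P" and l: "continuous_on K l"
    and x: "x \<in> P ` K"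
  obtains z where "z \<in> K" "P z = x" "l z = fiber_max P K l x"
proof -
  let ?F = "{z \<in> K. P z = x}"
  have "compact (l ` ?F)"
    using compact_fiber[OF K P] l by (intro compact_continuous_image) (auto intro: continuous_on_subset)
  moreover have "?F \<noteq> {}" using x by auto
  ultimately obtain z where "z \<in> ?F" "\<forall>y\<in>?F. l y \<le> l z"
    using compact_attains_sup[of "l ` ?F"] by auto
  then have "z \<in> K" "P z = x" "l z = fiber_max P K l x"
    unfolding fiber_max_def by (auto intro!: cSup_eq_maximum[symmetric])
  then show ?thesis by (rule that)
qed

lemma fiber_max_upper:
  fixes P :: "'a::t2_space \<Rightarrow> 'b::t2_space"
  assumes "compact K" and "continuous_on K P" and "continuous_on K l" and "z \<in> K"
  shows "l z \<le> fiber_max P K l (P z)"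
proof -
  have "bdd_above (l ` {y \<in> K. P y = P z})"
    using assms compact_fiber[of K P "P z"]
    by (intro bounded_imp_bdd_above compact_imp_bounded compact_continuous_image)
      (auto intro: continuous_on_subset)
  then show ?thesis
    unfolding fiber_max_def using assms(4) by (auto intro: cSup_upper)
qed

text \<open>The superlevel set of the fiber maximum at level a is the image of the compact set
  {z \<in> K. a \<le> l z}, hence closed.\<close>
lemma fiber_max_measurable:
  fixes P :: "'a::t2_space \<Rightarrow> 'b::t2_space"
  assumes K: "compact K" and P: "continuous_on K P" and l: "continuous_on K l"
  shows "fiber_max P K l \<in> borel_measurable (restrict_space borel (P ` K))"
proof (subst borel_measurable_iff_ge, intro allI)
  fix a
  have "compact (P ` K)" using P K by (rule compact_continuous_image)
  then have PK: "P ` K \<in> sets borel" by (auto intro: borel_closed compact_imp_closed)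
  have "{x \<in> P ` K. a \<le> fiber_max P K l x} = P ` {z \<in> K. a \<le> l z}"
  proof safe
    fix z assume "z \<in> K"
    then obtain y where "y \<in> K" "P y = P z" "l y = fiber_max P K l (P z)"
      using fiber_max_attained[OF K P l] by blast
    moreover assume "a \<le> fiber_max P K l (P z)"
    ultimately show "P z \<in> P ` {z \<in> K. a \<le> l z}" by (metis (mono_tags) image_eqI mem_Collect_eq)
  next
    fix z assume "z \<in> K" "a \<le> l z"
    then show "a \<le> fiber_max P K l (P z)"
      using fiber_max_upper[OF K P l] by (meson order_trans)
  qed auto
  moreover have "compact {z \<in> K. a \<le> l z}"
    using compact_continuous_preimage_closed[OF K l, of "{a..}"] by simp
  then have "P ` {z \<in> K. a \<le> l z} \<in> sets borel"
    using P by (intro borel_closed compact_imp_closed compact_continuous_image)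
      (auto intro: continuous_on_subset)
  ultimately show "{x \<in> space (restrict_space borel (P ` K)). a \<le> fiber_max P K l x}
      \<in> sets (restrict_space borel (P ` K))"
    using PK by (auto simp: space_restrict_space sets_restrict_space_iff)
qed

definition fiber_argmax :: "('a \<Rightarrow> 'b) \<Rightarrow> 'a set \<Rightarrow> ('a \<Rightarrow> real) \<Rightarrow> 'b \<Rightarrow> 'a" where
  "fiber_argmax P K h x = (THE z. z \<in> K \<and> P z = x \<and> h z = fiber_max P K h x)"

locale fiber_unique_max =
  fixes P :: "'a::t2_space \<Rightarrow> 'b::t2_space" and K :: "'a set" and h :: "'a \<Rightarrow> real"
  assumes compact: "compact K" and continuous_P: "continuous_on K P"
    and continuous_h: "continuous_on K h"
    and unique_max: "\<And>z z'. z \<in> K \<Longrightarrow> z' \<in> K \<Longrightarrow> P z' = P z \<Longrightarrow>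
      h z = fiber_max P K h (P z) \<Longrightarrow> h z' = fiber_max P K h (P z) \<Longrightarrow> z' = z"
begin

lemma fiber_argmax_attains:
  assumes "x \<in> P ` K"
  shows "fiber_argmax P K h x \<in> K" "P (fiber_argmax P K h x) = x"
    "h (fiber_argmax P K h x) = fiber_max P K h x"
proof -
  obtain z where z: "z \<in> K" "P z = x" "h z = fiber_max P K h x"
    using fiber_max_attained[OF compact continuous_P continuous_h assms] .
  have "fiber_argmax P K h x = z"
    unfolding fiber_argmax_def using z unique_max by (intro the_equality) auto
  then show "fiber_argmax P K h x \<in> K" "P (fiber_argmax P K h x) = x"
    "h (fiber_argmax P K h x) = fiber_max P K h x"
    using z by simp_all
qed

lemma fiber_argmax_in_closed_iff:
  assumes C: "closed C"
  shows "{x \<in> P ` K. fiber_argmax P K h x \<in> C}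
    = {x \<in> P ` (K \<inter> C). fiber_max P K h x \<le> fiber_max P (K \<inter> C) h x}"
proof -
  have KC: "compact (K \<inter> C)" using compact C by (rule compact_Int_closed)
  have P_KC: "continuous_on (K \<inter> C) P" and h_KC: "continuous_on (K \<inter> C) h"
    using continuous_P continuous_h by (auto intro: continuous_on_subset)
  show ?thesis
  proof safe
    fix z assume z: "z \<in> K" and C_max: "fiber_argmax P K h (P z) \<in> C"
    let ?g = "fiber_argmax P K h (P z)"
    have g: "?g \<in> K" "P ?g = P z" "h ?g = fiber_max P K h (P z)"
      using fiber_argmax_attains z by auto
    then show "P z \<in> P ` (K \<inter> C)" using C_max by (metis IntI image_eqI)
    show "fiber_max P K h (P z) \<le> fiber_max P (K \<inter> C) h (P z)"
      using fiber_max_upper[OF KC P_KC h_KC, of ?g] g C_max by simp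
  next
    fix z assume z: "z \<in> K" "z \<in> C"
      and le: "fiber_max P K h (P z) \<le> fiber_max P (K \<inter> C) h (P z)"
    obtain m where m: "m \<in> K \<inter> C" "P m = P z" "h m = fiber_max P (K \<inter> C) h (P z)"
      using fiber_max_attained[OF KC P_KC h_KC, of "P z"] z by blast
    have "h m \<le> fiber_max P K h (P z)"
      using fiber_max_upper[OF compact continuous_P continuous_h, of m] m by simp
    then have "h m = fiber_max P K h (P z)" using m le by simp
    moreover have "fiber_argmax P K h (P z) \<in> K" "P (fiber_argmax P K h (P z)) = P z"
      "h (fiber_argmax P K h (P z)) = fiber_max P K h (P z)"
      using fiber_argmax_attains z by auto
    ultimately have "m = fiber_argmax P K h (P z)"
      using unique_max m by (metis IntD1)
    then show "fiber_argmax P K h (P z) \<in> C" using m by simp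
  qed auto
qed

lemma fiber_argmax_closed_preimage:
  assumes C: "closed C"
  shows "{x \<in> P ` K. fiber_argmax P K h x \<in> C} \<in> sets borel"
proof -
  have KC: "compact (K \<inter> C)" using compact C by (rule compact_Int_closed)
  have P_KC: "continuous_on (K \<inter> C) P" and h_KC: "continuous_on (K \<inter> C) h"
    using continuous_P continuous_h by (auto intro: continuous_on_subset)
  let ?M = "restrict_space borel (P ` (K \<inter> C))"
  have "fiber_max P K h \<in> borel_measurable ?M"
    by (rule measurable_restrict_mono[OF fiber_max_measurable[OF compact continuous_P continuous_h]]) auto
  moreover have "fiber_max P (K \<inter> C) h \<in> borel_measurable ?M"
    by (rule fiber_max_measurable[OF KC P_KC h_KC])
  ultimately have "{x \<in> space ?M. fiber_max P K h x \<le> fiber_max P (K \<inter> C) h x} \<in> sets ?M"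
    by (rule borel_measurable_le)
  moreover have "P ` (K \<inter> C) \<in> sets borel"
    using KC P_KC by (intro borel_closed compact_imp_closed compact_continuous_image)
  ultimately show ?thesis
    unfolding fiber_argmax_in_closed_iff[OF C]
    by (simp add: space_restrict_space sets_restrict_space_iff)
qed

lemma fiber_argmax_measurable:
  "fiber_argmax P K h \<in> borel_measurable (restrict_space borel (P ` K))"
proof (rule borel_measurableI)
  fix U :: "'a set" assume "open U"
  have PK: "P ` K \<in> sets borel"
    using compact continuous_P by (intro borel_closed compact_imp_closed compact_continuous_image)
  have "fiber_argmax P K h -` U \<inter> P ` K = P ` K - {x \<in> P ` K. fiber_argmax P K h x \<in> - U}"
    by auto
  also have "\<dots> \<in> sets borel"
    using PK fiber_argmax_closed_preimage[of "- U"] \<open>open U\<close> by (intro sets.Diff) auto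
  finally show "fiber_argmax P K h -` U \<inter> space (restrict_space borel (P ` K))
      \<in> sets (restrict_space borel (P ` K))"
    using PK by (auto simp: space_restrict_space sets_restrict_space_iff)
qed

end

text \<open>Subtracting d |z|^2 makes a linear objective strictly concave: at the midpoint of two
  maximisers on one fiber it would exceed their common value by d |z - z'|^2 / 4.\<close>
lemma fiber_unique_max_concave_perturbation:
  fixes P :: "'a::real_inner \<Rightarrow> 'b::real_normed_vector"
  assumes K: "compact K" "convex K" and P: "bounded_linear P" and l: "bounded_linear l"
    and d: "d > 0"
  shows "fiber_unique_max P K (\<lambda>z. l z - d * (norm z)\<^sup>2)"
proof
  let ?h = "\<lambda>z. l z - d * (norm z)\<^sup>2"
  show "compact K" by (rule K(1))
  show cP: "continuous_on K P" using P by (rule linear_continuous_on)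
  show ch: "continuous_on K ?h"
    using linear_continuous_on[OF l] by (intro continuous_intros)
  fix z z' assume z: "z \<in> K" "z' \<in> K" "P z' = P z"
    and max: "?h z = fiber_max P K ?h (P z)" "?h z' = fiber_max P K ?h (P z)"
  define m where "m = (1/2) *\<^sub>R z + (1/2) *\<^sub>R z'"
  have "m \<in> K"
    unfolding m_def using convexD[OF K(2) z(1,2), of "1/2" "1/2"] by simp
  moreover have "P m = P z"
    using z(3) by (simp add: m_def linear_scale linear_add bounded_linear.linear[OF P]
        flip: scaleR_add_left)
  ultimately have "?h m \<le> ?h z"
    using fiber_max_upper[OF K(1) cP ch \<open>m \<in> K\<close>] max(1) by simp
  have norm_m: "(norm m)\<^sup>2 = ((norm z)\<^sup>2 + (norm z')\<^sup>2) / 2 - (norm (z - z'))\<^sup>2 / 4"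
    unfolding m_def power2_norm_eq_inner
    by (simp add: inner_add_left inner_add_right inner_diff_left inner_diff_right inner_commute
        field_simps)
  have l_m: "l m = (l z + l z') / 2"
    by (simp add: m_def linear_scale linear_add bounded_linear.linear[OF l])
  have "?h m = (?h z + ?h z') / 2 + d * (norm (z - z'))\<^sup>2 / 4"
    unfolding norm_m l_m by (simp add: field_simps)
  with \<open>?h m \<le> ?h z\<close> max have "d * (norm (z - z'))\<^sup>2 \<le> 0" by simp
  then show "z' = z" using d by (simp add: mult_le_0_iff)
qed

lemma linear_image_fiber_eq_interval:
  fixes P :: "'a::real_normed_vector \<Rightarrow> 'b::real_normed_vector"
  assumes K: "compact K" "convex K" and P: "bounded_linear P" and l: "bounded_linear l"
    and x: "x \<in> P ` K"
  shows "l ` {z \<in> K. P z = x} = {- fiber_max P K (\<lambda>z. - l z) x .. fiber_max P K l x}"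
proof -
  let ?F = "{z \<in> K. P z = x}"
  have "compact (l ` ?F)"
    using compact_fiber[OF K(1) linear_continuous_on[OF P]] linear_continuous_on[OF l]
    by (rule compact_continuous_image[rotated])
  moreover have "convex ?F"
    using convex_Int[OF K(2) convex_linear_vimage[OF bounded_linear.linear[OF P] convex_singleton]]
    by (simp add: vimage_def Int_def)
  then have "connected (l ` ?F)"
    using bounded_linear.linear[OF l] by (intro convex_connected convex_linear_image)
  ultimately obtain a b where ab: "l ` ?F = {a..b}"
    using connected_compact_interval_1 by blast
  moreover have "{a..b} \<noteq> {}" using ab x by blast
  then have "a \<le> b" by simp
  moreover have "(\<lambda>z. - l z) ` ?F = uminus ` (l ` ?F)" by (simp add: image_image)
  ultimately show ?thesis by (simp add: fiber_max_def)
qed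

lemma fiber_max_reflect:
  fixes P :: "'a::real_vector \<Rightarrow> 'b::real_vector"
  assumes "uminus ` K = K" and "linear P" and "linear l"
  shows "fiber_max P K (\<lambda>z. - l z) x = fiber_max P K l (- x)"
proof -
  have neg_K: "- z \<in> K" if "z \<in> K" for z
    using assms(1) that by blast
  have "{z \<in> K. P z = - x} = uminus ` {z \<in> K. P z = x}"
  proof safe
    fix z assume "z \<in> K" "P z = - x"
    then show "z \<in> uminus ` {z \<in> K. P z = x}"
      using neg_K linear_neg[OF assms(2)] by (intro image_eqI[of _ _ "- z"]) auto
  qed (use neg_K linear_neg[OF assms(2)] in auto)
  then have "l ` {z \<in> K. P z = - x} = (\<lambda>z. - l z) ` {z \<in> K. P z = x}"
    by (simp add: image_image linear_neg[OF assms(3)])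
  then show ?thesis by (simp add: fiber_max_def)
qed

locale isometric_embedding =
  fixes f :: "'b::euclidean_space \<Rightarrow> 'a::euclidean_space"
  assumes linear: "linear f" and norm_preserving: "\<And>x. norm (f x) = norm x"
begin

definition proj :: "'a \<Rightarrow> 'a" where
  "proj z = f (adjoint f z)"

lemma inner_preserving: "f a \<bullet> f b = a \<bullet> b"
proof -
  have "(norm (f (a + b)))\<^sup>2 = (norm (a + b))\<^sup>2" "(norm (f a))\<^sup>2 = (norm a)\<^sup>2"
    "(norm (f b))\<^sup>2 = (norm b)\<^sup>2"
    using norm_preserving by simp_all
  then show ?thesis
    by (simp add: linear_add[OF linear] power2_norm_eq_inner inner_add_left inner_add_right
        inner_commute)
qed

lemma adjoint_inner: "x \<bullet> adjoint f y = f x \<bullet> y"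
  by (rule adjoint_works[OF linear])

lemma adjoint_apply [simp]: "adjoint f (f s) = s"
proof -
  have "\<forall>x. x \<bullet> (adjoint f (f s) - s) = 0"
    by (simp add: inner_diff_right adjoint_inner inner_preserving)
  then show ?thesis by (metis inner_eq_zero_iff right_minus_eq)
qed

lemma bounded_linear_f: "bounded_linear f"
  using linear by (simp add: linear_conv_bounded_linear)

lemma bounded_linear_adjoint: "bounded_linear (adjoint f)"
  using adjoint_linear[OF linear] by (simp add: linear_conv_bounded_linear)

lemma bounded_linear_proj: "bounded_linear proj"
  unfolding proj_def[abs_def]
  using bounded_linear_compose[OF bounded_linear_f bounded_linear_adjoint] .

lemma diff_proj_orth: "z - proj z \<in> orth (range f)"
  by (auto simp: orth_def proj_def inner_diff_left inner_preserving adjoint_inner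
      inner_commute[of "adjoint f z"] inner_commute[of z])

lemma projV_range: "projV (range f) = proj"
proof
  fix z
  have proj_z: "proj z \<in> range f \<and> (\<forall>v\<in>range f. (z - proj z) \<bullet> v = 0)"
    using diff_proj_orth[of z] by (auto simp: proj_def orth_def)
  show "projV (range f) z = proj z" unfolding projV_def
  proof (rule the_equality)
    fix p assume p: "p \<in> range f \<and> (\<forall>v\<in>range f. (z - p) \<bullet> v = 0)"
    then obtain a where "p = f a" by auto
    then have "p - proj z \<in> range f"
      by (auto simp: proj_def linear_diff[OF linear, symmetric])
    then have "(z - p) \<bullet> (p - proj z) = 0" "(z - proj z) \<bullet> (p - proj z) = 0"
      using p proj_z by auto
    then have "(p - proj z) \<bullet> (p - proj z) = 0"
      by (simp add: inner_diff_left inner_diff_right algebra_simps)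
    then show "p = proj z" by simp
  qed (rule proj_z)
qed

lemma orth_adjoint:
  assumes "u \<in> orth (range f)"
  shows "adjoint f u = 0"
proof -
  have "adjoint f u \<bullet> adjoint f u = 0"
    using assms by (simp add: adjoint_inner orth_def inner_commute)
  then show ?thesis by simp
qed

lemma inner_proj_orth: "u \<in> orth (range f) \<Longrightarrow> u \<bullet> proj z = 0"
  by (simp add: orth_def proj_def)

lemma proj_add_orth: "w \<in> orth (range f) \<Longrightarrow> proj (f s + w) = f s"
  using orth_adjoint[of w] by (simp add: proj_def linear_add[OF adjoint_linear[OF linear]])

lemma Tmap_range: "u \<in> orth (range f) \<Longrightarrow> Tmap (range f) u z = (proj z, u \<bullet> z)"
  by (simp add: Tmap_def projV_range inner_diff_right inner_proj_orth)

end

lemma set_integrable_inner_right: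
  assumes "set_integrable M A g"
  shows "set_integrable M A (\<lambda>s. u \<bullet> g s)"
proof -
  have "integrable M (\<lambda>s. u \<bullet> (indicator A s *\<^sub>R g s))"
    using assms unfolding set_integrable_def by (rule integrable_inner_right)
  then show ?thesis unfolding set_integrable_def by (simp add: inner_scaleR_right)
qed

lemma set_integral_inner_right:
  "set_integrable M A g \<Longrightarrow> u \<bullet> (LINT s:A|M. g s) = (LINT s:A|M. u \<bullet> g s)"
  unfolding set_integrable_def set_lebesgue_integral_def
  by (subst integral_inner_right[symmetric]) (auto simp: inner_scaleR_right)

lemma set_integral_minus_const_le:
  fixes g g' :: "'b \<Rightarrow> real"
  assumes A: "A \<in> sets M" "emeasure M A < \<infinity>"
    and int: "set_integrable M A g" "set_integrable M A g'"
    and le: "\<And>s. s \<in> A \<Longrightarrow> g s - c \<le> g' s"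
  shows "(LINT s:A|M. g s) - c * measure M A \<le> (LINT s:A|M. g' s)"
proof -
  have const: "set_integrable M A (\<lambda>s. c)"
    unfolding set_integrable_def using A
    by (intro integrableI_bounded_set_indicator[where B="\<bar>c\<bar>"]) auto
  have "(LINT s:A|M. c) = c * measure M A"
    using set_integral_const[of A M c] A by (simp add: mult.commute)
  then have "(LINT s:A|M. g s) - c * measure M A = (LINT s:A|M. g s - c)"
    using set_integral_diff(2)[OF int(1) const] by linarith
  also have "\<dots> \<le> (LINT s:A|M. g' s)"
    using le by (intro set_integral_mono set_integral_diff(1) int const)
  finally show ?thesis .
qed

lemma measure_lborel_interval_sections:
  fixes C :: "('b::euclidean_space \<times> real) set"
  assumes C: "C \<in> sets borel"
    and sections: "\<And>s. Pair s -` C = (if s \<in> A then {a s .. b s} else {})"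
    and le: "\<And>s. s \<in> A \<Longrightarrow> a s \<le> b s"
    and int: "set_integrable lborel A (\<lambda>s. b s - a s)"
  shows "measure lborel C = (LINT s:A|lborel. b s - a s)"
proof -
  let ?g = "\<lambda>s. indicator A s * (b s - a s)"
  have "emeasure lborel (Pair s -` C) = ennreal (?g s)" for s
    using le by (simp add: sections indicator_def)
  moreover have "C \<in> sets (lborel \<Otimes>\<^sub>M lborel)" using C by (simp only: lborel_prod sets_lborel)
  ultimately have "emeasure lborel C = (\<integral>\<^sup>+s. ennreal (?g s) \<partial>lborel)"
    using lborel.emeasure_pair_measure_alt[of C lborel] by (simp add: lborel_prod)
  moreover have "?g \<in> borel_measurable lborel"
    using int unfolding set_integrable_def by (simp add: borel_measurable_integrable)
  moreover have "0 \<le> ?g s" for s using le by (simp add: indicator_def)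
  ultimately show ?thesis
    by (simp add: measure_def set_lebesgue_integral_def enn2real_nn_integral_eq_integral)
qed

lemma lborel_reflect: "distr lborel borel uminus = (lborel :: 'b::euclidean_space measure)"
  using lborel_affine[of "-1" "0::'b"] by (simp add: density_1)

lemma set_integral_reflect_lborel:
  fixes g :: "'b::euclidean_space \<Rightarrow> 'c::{banach,second_countable_topology}"
  assumes A: "uminus ` A = A" and int: "set_integrable lborel A g"
  shows "set_integrable lborel A (\<lambda>s. g (- s))"
    and "(LINT s:A|lborel. g (- s)) = (LINT s:A|lborel. g s)"
proof -
  let ?G = "\<lambda>s. indicator A s *\<^sub>R g s"
  have indicator_neg: "indicator A (- s) = (indicator A s :: real)" for s
    using A by (force simp: indicator_def)
  have G: "?G \<in> borel_measurable borel" "integrable lborel ?G"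
    using int unfolding set_integrable_def by (auto simp: borel_measurable_integrable)
  have uminus: "uminus \<in> measurable lborel (borel :: 'b measure)" by simp
  show "set_integrable lborel A (\<lambda>s. g (- s))"
    using integrable_distr_eq[OF uminus G(1)] G(2)
    unfolding set_integrable_def by (simp add: lborel_reflect indicator_neg)
  show "(LINT s:A|lborel. g (- s)) = (LINT s:A|lborel. g s)"
    using integral_distr[OF uminus G(1)]
    unfolding set_lebesgue_integral_def by (simp add: lborel_reflect indicator_neg)
qed

locale fiber_body_setting = isometric_embedding f for f :: "real^'n \<Rightarrow> 'a::euclidean_space" +
  fixes K :: "'a set"
  assumes convex_body: "convex_body K"
begin

lemma compact_K: "compact K" and convex_K: "convex K"
  using convex_body by (simp_all add: convex_body_def)

definition base :: "'a set" where
  "base = proj ` K"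

definition base_coords :: "(real^'n) set" where
  "base_coords = {s. f s \<in> base}"

lemma continuous_proj: "continuous_on X proj"
  using bounded_linear_proj by (rule linear_continuous_on)

lemma compact_base: "compact base"
  unfolding base_def using continuous_proj compact_K by (rule compact_continuous_image)

lemma sets_base_coords [measurable]: "base_coords \<in> sets borel"
proof -
  have "closed (f -` base)"
    using compact_base linear_continuous_on[OF bounded_linear_f]
    by (auto intro: closed_vimage compact_imp_closed)
  then show ?thesis by (simp add: base_coords_def vimage_def borel_closed)
qed

lemma emeasure_base_coords_finite: "emeasure lborel base_coords < \<infinity>"
proof (rule emeasure_bounded_finite)
  obtain B where "\<forall>x\<in>base. norm x \<le> B"
    using compact_base compact_imp_bounded bounded_iff by metis
  then show "bounded base_coords"
    unfolding base_coords_def bounded_iff using norm_preserving by (intro exI[of _ B]) auto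
qed

lemma set_integrable_base_coords:
  fixes \<phi> :: "'a \<Rightarrow> 'c::{banach,second_countable_topology}"
  assumes meas: "\<phi> \<in> borel_measurable (restrict_space borel base)"
    and bound: "\<And>x. x \<in> base \<Longrightarrow> norm (\<phi> x) \<le> B"
  shows "set_integrable lborel base_coords (\<lambda>s. \<phi> (f s))"
proof -
  have "f \<in> measurable (restrict_space lborel base_coords) (restrict_space borel base)"
    by (rule measurable_restrict_space3)
      (auto simp: base_coords_def intro: borel_measurable_continuous_onI linear_continuous_on bounded_linear_f)
  then have "(\<lambda>s. \<phi> (f s)) \<in> borel_measurable (restrict_space lborel base_coords)"
    by (rule measurable_compose[OF _ meas])
  then have "(\<lambda>s. indicator base_coords s *\<^sub>R \<phi> (f s)) \<in> borel_measurable lborel"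
    using sets_base_coords by (subst (asm) borel_measurable_restrict_space_iff) auto
  then show ?thesis
    unfolding set_integrable_def using emeasure_base_coords_finite bound sets_base_coords
    by (intro integrableI_bounded_set[where A=base_coords and B=B]) (auto simp: base_coords_def)
qed

text \<open>roof u is the function \<phi> of the shadow volume of T_u(K): the top of T_u(K) above x.\<close>
abbreviation roof :: "'a \<Rightarrow> 'a \<Rightarrow> real" where
  "roof u \<equiv> fiber_max proj K (inner u)"

lemma continuous_inner: "continuous_on X (inner u)"
  by (intro continuous_intros)

lemma roof_upper: "z \<in> K \<Longrightarrow> u \<bullet> z \<le> roof u (proj z)"
  by (rule fiber_max_upper[OF compact_K continuous_proj continuous_inner])

lemma roof_attained:
  assumes "x \<in> base"
  obtains z where "z \<in> K" "proj z = x" "u \<bullet> z = roof u x"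
  using fiber_max_attained[OF compact_K continuous_proj continuous_inner] assms
  unfolding base_def by blast

lemma set_integrable_roof: "set_integrable lborel base_coords (\<lambda>s. roof u (f s))"
proof -
  obtain R where R: "\<forall>z\<in>K. norm z \<le> R"
    using compact_K compact_imp_bounded bounded_iff by metis
  have "norm (roof u x) \<le> norm u * R" if "x \<in> base" for x
  proof -
    obtain z where z: "z \<in> K" "u \<bullet> z = roof u x" using \<open>x \<in> base\<close> by (rule roof_attained)
    have "norm (u \<bullet> z) \<le> norm u * norm z" by (simp add: Cauchy_Schwarz_ineq2)
    also have "\<dots> \<le> norm u * R" using R z(1) by (simp add: mult_left_mono)
    finally show ?thesis using z(2) by simp
  qed
  moreover have "roof u \<in> borel_measurable (restrict_space borel base)"
    unfolding base_def by (rule fiber_max_measurable[OF compact_K continuous_proj continuous_inner])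
  ultimately show ?thesis by (intro set_integrable_base_coords)
qed

lemma set_integrable_section:
  assumes meas: "\<gamma> \<in> borel_measurable (restrict_space borel base)"
    and is_section: "\<And>x. x \<in> base \<Longrightarrow> \<gamma> x \<in> fiber (range f) K x"
  shows "set_integrable lborel base_coords (\<lambda>s. \<gamma> (f s))"
proof -
  obtain R where R: "\<forall>z\<in>K \<union> base. norm z \<le> R"
    using compact_K compact_base compact_Un compact_imp_bounded bounded_iff by metis
  have "norm (\<gamma> x) \<le> R + R" if x: "x \<in> base" for x
  proof -
    have "x + \<gamma> x \<in> K" using is_section x by (simp add: fiber_def)
    have "norm (\<gamma> x) \<le> norm (x + \<gamma> x) + norm x"
      by (metis add_diff_cancel_left' norm_triangle_ineq4)
    also have "\<dots> \<le> R + R" using R x \<open>x + \<gamma> x \<in> K\<close> by (intro add_mono) auto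
    finally show ?thesis .
  qed
  then show ?thesis by (intro set_integrable_base_coords[OF meas])
qed

lemma shadow_volume_Tmap:
  assumes "u \<in> orth (range f)"
  shows "shadow_volume f (Tmap (range f) u ` K) = (LINT s:base_coords|lborel. roof u (f s))"
proof -
  have "fst ` Tmap (range f) u ` K = base"
    using Tmap_range[OF assms] by (force simp: base_def image_image)
  moreover have "{t. (x, t) \<in> Tmap (range f) u ` K} = inner u ` {z \<in> K. proj z = x}" for x
    using Tmap_range[OF assms] by auto
  ultimately show ?thesis
    by (simp add: shadow_volume_def int_V_def fiber_max_def base_coords_def)
qed

lemma fiber_body_range: "fiber_body (range f) f K =
    {LINT s:base_coords|lborel. \<gamma> (f s) | \<gamma>. \<gamma> \<in> borel_measurable (restrict_space borel base) \<and>
       (\<forall>x\<in>base. \<gamma> x \<in> fiber (range f) K x)}"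
  unfolding fiber_body_def int_V_def projV_range base_def base_coords_def ..

lemma inner_fiber_body_le:
  assumes u: "u \<in> orth (range f)" and y: "y \<in> fiber_body (range f) f K"
  shows "u \<bullet> y \<le> (LINT s:base_coords|lborel. roof u (f s))"
proof -
  obtain \<gamma> where y_eq: "y = (LINT s:base_coords|lborel. \<gamma> (f s))"
    and meas: "\<gamma> \<in> borel_measurable (restrict_space borel base)"
    and is_section: "\<forall>x\<in>base. \<gamma> x \<in> fiber (range f) K x"
    using y unfolding fiber_body_range by blast
  have int: "set_integrable lborel base_coords (\<lambda>s. \<gamma> (f s))"
    using meas is_section by (intro set_integrable_section) auto
  have "u \<bullet> y = (LINT s:base_coords|lborel. u \<bullet> \<gamma> (f s))"
    unfolding y_eq by (rule set_integral_inner_right[OF int])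
  also have "\<dots> \<le> (LINT s:base_coords|lborel. roof u (f s))"
  proof (rule set_integral_mono[OF set_integrable_inner_right[OF int] set_integrable_roof])
    fix s assume "s \<in> base_coords"
    then have "\<gamma> (f s) \<in> orth (range f)" "f s + \<gamma> (f s) \<in> K"
      using is_section by (auto simp: fiber_def base_coords_def)
    moreover have "u \<bullet> \<gamma> (f s) = u \<bullet> (f s + \<gamma> (f s))"
      using u by (simp add: inner_add_right orth_def inner_commute)
    ultimately show "u \<bullet> \<gamma> (f s) \<le> roof u (f s)"
      using roof_upper[of "f s + \<gamma> (f s)" u] by (simp add: proj_add_orth)
  qed
  finally show ?thesis .
qed

text \<open>An almost optimal section: on each fiber take the unique maximiser of
  u \<bullet> z - d |z|^2, which is measurable in x and loses at most d R^2 against the roof.\<close>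
lemma fiber_body_approx:
  assumes u: "u \<in> orth (range f)" and R: "\<forall>z\<in>K. norm z \<le> R" and d: "d > 0"
  obtains y where "y \<in> fiber_body (range f) f K"
    "(LINT s:base_coords|lborel. roof u (f s)) - d * R\<^sup>2 * measure lborel base_coords \<le> u \<bullet> y"
proof -
  define h where "h z = u \<bullet> z - d * (norm z)\<^sup>2" for z
  interpret fiber_unique_max proj K h
    unfolding h_def using compact_K convex_K bounded_linear_proj bounded_linear_inner_right d
    by (rule fiber_unique_max_concave_perturbation)
  define \<gamma> where "\<gamma> x = fiber_argmax proj K h x - x" for x
  have meas: "\<gamma> \<in> borel_measurable (restrict_space borel base)"
    unfolding \<gamma>_def[abs_def] base_def
    by (intro borel_measurable_diff fiber_argmax_measurable measurable_restrict_space1) simp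
  have is_section: "\<gamma> x \<in> fiber (range f) K x" if "x \<in> base" for x
    using fiber_argmax_attains[of x] diff_proj_orth[of "fiber_argmax proj K h x"] that
    by (simp add: fiber_def \<gamma>_def base_def)
  have int: "set_integrable lborel base_coords (\<lambda>s. \<gamma> (f s))"
    using meas is_section by (rule set_integrable_section)
  have near_roof: "roof u x - d * R\<^sup>2 \<le> u \<bullet> \<gamma> x" if "x \<in> base" for x
  proof -
    obtain z where z: "z \<in> K" "proj z = x" "u \<bullet> z = roof u x"
      using \<open>x \<in> base\<close> by (rule roof_attained)
    have "h z \<le> h (fiber_argmax proj K h x)"
      using fiber_max_upper[OF compact continuous_P continuous_h z(1)] fiber_argmax_attains[of x]
        z(2) that
      by (simp add: base_def)
    moreover have "d * (norm z)\<^sup>2 \<le> d * R\<^sup>2"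
      using R z(1) d by (auto intro: mult_left_mono power_mono)
    moreover have "u \<bullet> \<gamma> x = u \<bullet> fiber_argmax proj K h x"
      using u that by (auto simp: \<gamma>_def inner_diff_right base_def inner_proj_orth)
    moreover have "0 \<le> d * (norm (fiber_argmax proj K h x))\<^sup>2" using d by simp
    ultimately show ?thesis
      using z(3) unfolding h_def by linarith
  qed
  have "(LINT s:base_coords|lborel. roof u (f s)) - d * R\<^sup>2 * measure lborel base_coords
      \<le> (LINT s:base_coords|lborel. u \<bullet> \<gamma> (f s))"
    using near_roof sets_base_coords emeasure_base_coords_finite set_integrable_roof
      set_integrable_inner_right[OF int]
    by (intro set_integral_minus_const_le) (auto simp: base_coords_def)
  also have "\<dots> = u \<bullet> (LINT s:base_coords|lborel. \<gamma> (f s))"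
    by (rule set_integral_inner_right[OF int, symmetric])
  finally show ?thesis
    using that meas is_section unfolding fiber_body_range by blast
qed

lemma supp_fun_fiber_body:
  assumes u: "u \<in> orth (range f)"
  shows "supp_fun (fiber_body (range f) f K) u = (LINT s:base_coords|lborel. roof u (f s))"
proof -
  define I where "I = (LINT s:base_coords|lborel. roof u (f s))"
  let ?X = "inner u ` fiber_body (range f) f K"
  obtain R where R: "\<forall>z\<in>K. norm z \<le> R"
    using compact_K compact_imp_bounded bounded_iff by metis
  let ?c = "R\<^sup>2 * measure lborel base_coords + 1"
  have upper: "\<And>t. t \<in> ?X \<Longrightarrow> t \<le> I"
    using inner_fiber_body_le[OF u] unfolding I_def by blast
  have "?X \<noteq> {}"
    using fiber_body_approx[OF u R zero_less_one] by blast
  then have "Sup ?X \<le> I" using upper by (rule cSup_least)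
  moreover have "I \<le> Sup ?X + e" if "e > 0" for e
  proof -
    have "?c > 0" by (simp add: add_nonneg_pos)
    then obtain y where y: "y \<in> fiber_body (range f) f K"
      "I - e / ?c * R\<^sup>2 * measure lborel base_coords \<le> u \<bullet> y"
      using fiber_body_approx[OF u R, of "e / ?c"] \<open>e > 0\<close> unfolding I_def by auto
    have "u \<bullet> y \<le> Sup ?X"
      using y(1) upper by (intro cSup_upper bdd_aboveI) auto
    moreover have "e / ?c * R\<^sup>2 * measure lborel base_coords \<le> e"
      using \<open>?c > 0\<close> \<open>e > 0\<close> by (simp add: field_simps)
    ultimately show ?thesis using y(2) by linarith
  qed
  then have "I \<le> Sup ?X" by (rule field_le_epsilon)
  ultimately show ?thesis unfolding supp_fun_def I_def by simp
qed

lemma roof_uminus: "roof (- u) = fiber_max proj K (\<lambda>z. - (u \<bullet> z))"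
proof -
  have "inner (- u) = (\<lambda>z. - (u \<bullet> z))" by (simp add: fun_eq_iff)
  then show ?thesis by simp
qed

lemma vol_V1_Tmap:
  assumes u: "u \<in> orth (range f)"
  shows "vol_V1 f (Tmap (range f) u ` K) = (LINT s:base_coords|lborel. roof u (f s) + roof (- u) (f s))"
proof -
  define C where "C = {(s, t). (f s, t) \<in> Tmap (range f) u ` K}"
  have C_image: "C = (\<lambda>z. (adjoint f z, u \<bullet> z)) ` K"
    unfolding C_def using Tmap_range[OF u]
    by (force simp: proj_def image_iff dest: arg_cong[where f="adjoint f"])
  have "continuous_on K (\<lambda>z. (adjoint f z, u \<bullet> z))"
    using linear_continuous_on[OF bounded_linear_adjoint] by (intro continuous_intros)
  then have "compact C"
    unfolding C_image using compact_K by (rule compact_continuous_image)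
  then have "C \<in> sets borel" by (auto intro: borel_closed compact_imp_closed)
  moreover have "Pair s -` C = (if s \<in> base_coords then {- roof (- u) (f s) .. roof u (f s)} else {})"
    for s
  proof -
    have "Pair s -` C = inner u ` {z \<in> K. proj z = f s}"
      unfolding C_def using Tmap_range[OF u] by (auto simp: image_iff) metis
    then show ?thesis
      using linear_image_fiber_eq_interval[OF compact_K convex_K bounded_linear_proj
          bounded_linear_inner_right, of "f s" u]
      by (auto simp: base_coords_def base_def roof_uminus image_iff)
  qed
  moreover have "- roof (- u) (f s) \<le> roof u (f s)" if "s \<in> base_coords" for s
  proof -
    have "f s \<in> base" using that by (simp add: base_coords_def)
    then obtain z where "z \<in> K" "proj z = f s" "u \<bullet> z = roof u (f s)"
      by (rule roof_attained)
    then show ?thesis using roof_upper[of z "- u"] by simp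
  qed
  moreover have "set_integrable lborel base_coords (\<lambda>s. roof u (f s) - - roof (- u) (f s))"
    using set_integrable_roof[of u] set_integrable_roof[of "- u"] by simp
  ultimately show ?thesis
    unfolding vol_V1_def C_def[symmetric] by (subst measure_lborel_interval_sections) auto
qed

lemma vol_V1_Tmap_symmetric:
  assumes u: "u \<in> orth (range f)" and sym: "uminus ` K = K"
  shows "vol_V1 f (Tmap (range f) u ` K) = 2 * (LINT s:base_coords|lborel. roof u (f s))"
proof -
  have proj_neg: "proj (- z) = - proj z" for z
    using bounded_linear_proj by (rule linear_neg[OF bounded_linear.linear])
  have f_neg: "f (- s) = - f s" for s
    using linear by (rule linear_neg)
  have roof_neg: "roof (- u) (f s) = roof u (f (- s))" for s
    unfolding roof_uminus f_neg
    using sym bounded_linear.linear[OF bounded_linear_proj]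
      bounded_linear.linear[OF bounded_linear_inner_right]
    by (rule fiber_max_reflect)
  have neg_base_coords: "uminus ` base_coords \<subseteq> base_coords"
    using sym by (auto simp: base_coords_def base_def f_neg simp flip: proj_neg intro!: imageI)
  have "base_coords = uminus ` uminus ` base_coords" by (simp add: image_image)
  also have "\<dots> \<subseteq> uminus ` base_coords" using neg_base_coords by (rule image_mono)
  finally have base_coords_sym: "uminus ` base_coords = base_coords" using neg_base_coords by (rule antisym[rotated])
  have "vol_V1 f (Tmap (range f) u ` K)
      = (LINT s:base_coords|lborel. roof u (f s)) + (LINT s:base_coords|lborel. roof u (f (- s)))"
    unfolding vol_V1_Tmap[OF u] roof_neg
    using set_integrable_roof set_integral_reflect_lborel(1)[OF base_coords_sym set_integrable_roof]
    by (rule set_integral_add(2))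
  also have "\<dots> = 2 * (LINT s:base_coords|lborel. roof u (f s))"
    using set_integral_reflect_lborel(2)[OF base_coords_sym set_integrable_roof] by simp
  finally show ?thesis .
qed

end

theorem mainTheorem13:
  fixes f :: "real^'n \<Rightarrow> 'a::euclidean_space" and V K :: "'a set"
  assumes "linear f" and "\<forall>x. norm (f x) = norm x" and "V = range f"
    and "convex_body K"
  shows "(\<forall>u\<in>orth V. supp_fun (fiber_body V f K) u = shadow_volume f (Tmap V u ` K)) \<and>
         (uminus ` K = K \<longrightarrow>
            (\<forall>u\<in>orth V. supp_fun (fiber_body V f K) u = 1/2 * vol_V1 f (Tmap V u ` K)))"
proof -
  interpret fiber_body_setting f K
    using assms by (simp add: fiber_body_setting_def fiber_body_setting_axioms_def
        isometric_embedding_def)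
  show ?thesis
    unfolding \<open>V = range f\<close>
    using supp_fun_fiber_body shadow_volume_Tmap vol_V1_Tmap_symmetric by simp
qed

end
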